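(* For $p=2$, \[ F_0(q)= \frac14 \sum_{\mathbf n \in \mathbb{Z}^2} \left(12 n_1 n_2-3n_1^2-3n_2^2-n_1-n_2\right) q^{ 2 Q\left(\mathbf n-\left(\frac12,\frac12\right)\right) }. \]
   Context: $q:=e^{2\pi i\tau}$, $\tau\in\mathbb H$. $Q(\mathbf n):=n_1^2+n_2^2-n_1n_2$. With $p=2$, \begin{align*} F(\zeta_1,\zeta_2;q)&:=\sum_{n_1,n_2\in\mathbb Z}\frac{q^{2Q\left(n_1-\frac12,\,n_2-\frac12\right)}}{\left(1-\zeta_1^{-1}\right)\left(1-\zeta_2^{-1}\right)\left(1-\zeta_1^{-1}\zeta_2^{-1}\right)}\Big(\zeta_1^{n_1-1} \zeta_2^{n_2-1} -\zeta_1^{-n_1+n_2-1}\zeta_2^{n_2-1}\\ &\qquad-\zeta_1^{n_1-1}\zeta_2^{-n_2+n_1-1}+\zeta_1^{-n_2-1} \zeta_2^{-n_2+n_1-1}+\zeta_1^{-n_1+n_2-1} \zeta_2^{-n_1-1}-\zeta_1^{-n_2-1}\zeta_2^{-n_1-1}\Big), \end{align*} where each summand is a Laurent polynomial in $\zeta_1,\zeta_2$, and $F_0(q):=\lim_{(\zeta_1,\zeta_2)\to(1,1)}F(\zeta_1,\zeta_2;q)$. *)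

theory Defs
  imports "HOL-Analysis.Analysis"
begin

text \<open>Fractional power of the nome: q^x := exp(2 pi i tau x), with q = e^(2 pi i tau).\<close>
definition qpow :: "complex \<Rightarrow> real \<Rightarrow> complex" where
  "qpow \<tau> x = exp (2 * complex_of_real pi * \<i> * \<tau> * complex_of_real x)"

definition Qform :: "real \<Rightarrow> real \<Rightarrow> real" where
  "Qform x y = x^2 + y^2 - x * y"

definition F_term :: "complex \<Rightarrow> complex \<Rightarrow> complex \<Rightarrow> int \<times> int \<Rightarrow> complex" where
  "F_term z1 z2 \<tau> n = (let n1 = fst n; n2 = snd n in
     qpow \<tau> (2 * Qform (real_of_int n1 - 1/2) (real_of_int n2 - 1/2))
     / ((1 - inverse z1) * (1 - inverse z2) * (1 - inverse z1 * inverse z2))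
     * ( z1 powi (n1 - 1) * z2 powi (n2 - 1)
       - z1 powi (-n1 + n2 - 1) * z2 powi (n2 - 1)
       - z1 powi (n1 - 1) * z2 powi (-n2 + n1 - 1)
       + z1 powi (-n2 - 1) * z2 powi (-n2 + n1 - 1)
       + z1 powi (-n1 + n2 - 1) * z2 powi (-n1 - 1)
       - z1 powi (-n2 - 1) * z2 powi (-n1 - 1)))"

definition F :: "complex \<Rightarrow> complex \<Rightarrow> complex \<Rightarrow> complex" where
  "F z1 z2 \<tau> = (\<Sum>\<^sub>\<infinity> n\<in>(UNIV :: (int \<times> int) set). F_term z1 z2 \<tau> n)"

definition regular_pts :: "(complex \<times> complex) set" where
  "regular_pts = {(z1, z2). z1 \<noteq> 0 \<and> z2 \<noteq> 0 \<and> z1 \<noteq> 1 \<and> z2 \<noteq> 1 \<and> z1 * z2 \<noteq> 1}"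

end

theory Submission
  imports Defs
begin

text \<open>
  The six-term numerator of each summand of F is the Weyl alternant of type A2 of a monomial, and it
  is divisible by the denominator (1 - 1/z1)(1 - 1/z2)(1 - 1/(z1 z2)): pairing the terms whose
  exponents differ by a multiple of (1,1) divides by z1 z2 - 1, and the resulting Laurent polynomial
  vanishes on the lines z1 = 1 and z2 = 1. The quotient is written with signed geometric sums, which
  grow at most exponentially in |n1| + |n2| near (1,1), while the theta weights decay like a
  Gaussian; so dominated convergence lets the limit be taken termwise. At (1,1) the quotient equals
  -(n1 - 2 n2)(2 n1 - n2)(n1 + n2)/2, which differs from a quarter of the stated coefficient by a
  polynomial that is odd under n \<mapsto> (1,1) - n. This reflection preserves the theta weight, so
  the difference sums to zero.
\<close>

section \<open>Signed sums over integer ranges\<close>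

text \<open>
  isum k f sums f over [0, k) for k \<ge> 0 and is minus the sum over [k, 0) for k < 0; with this
  sign convention isum (k + 1) f = isum k f + f k for every integer k.
\<close>
definition isum :: "int \<Rightarrow> (int \<Rightarrow> 'a::ab_group_add) \<Rightarrow> 'a" where
  "isum k f = (if 0 \<le> k then sum f {0..<k} else - sum f {k..<0})"

lemma isum_0 [simp]: "isum 0 f = 0"
  by (simp add: isum_def)

lemma isum_plus1: "isum (k + 1) f = isum k f + f k"
proof -
  consider "0 \<le> k" | "k = -1" | "k < -1" by linarith
  then show ?thesis
  proof cases
    case 1
    have "{0..<k + 1} = insert k {0..<k}" using 1 by auto
    then show ?thesis using 1 by (simp add: isum_def)
  next
    case 2
    have "{-1..<0} = {-1 :: int}" by auto
    then show ?thesis using 2 by (simp add: isum_def)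
  next
    case 3
    have "{k..<0} = insert k {k + 1..<0}" using 3 by auto
    then show ?thesis using 3 by (simp add: isum_def)
  qed
qed

lemma isum_telescope: "isum k (\<lambda>i. g (i + 1) - g i) = g k - g 0"
proof (induction k rule: int_induct[where k = 0])
  case (step1 i)
  then show ?case by (simp add: isum_plus1)
next
  case (step2 i)
  have "isum (i - 1) (\<lambda>i. g (i + 1) - g i) = isum i (\<lambda>i. g (i + 1) - g i) - (g i - g (i - 1))"
    using isum_plus1[of "i - 1" "\<lambda>i. g (i + 1) - g i"] by simp
  then show ?case using step2 by simp
qed simp

lemma isum_cmult: "isum k (\<lambda>i. c * f i) = (c :: 'a :: comm_ring) * isum k f"
  by (simp add: isum_def sum_distrib_left)

lemma norm_isum_le:
  fixes f :: "int \<Rightarrow> 'a::real_normed_vector"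
  assumes "\<And>i. \<bar>i\<bar> \<le> \<bar>k\<bar> \<Longrightarrow> norm (f i) \<le> B"
  shows "norm (isum k f) \<le> of_int \<bar>k\<bar> * B"
proof (cases "0 \<le> k")
  case True
  have "norm (sum f {0..<k}) \<le> of_nat (card {0..<k}) * B"
    by (rule sum_norm_bound) (use assms True in auto)
  then show ?thesis using True by (simp add: isum_def)
next
  case False
  have "norm (sum f {k..<0}) \<le> of_nat (card {k..<0}) * B"
    by (rule sum_norm_bound) (use assms False in auto)
  then show ?thesis using False by (simp add: isum_def)
qed

section \<open>Unordered sums\<close>

lemma infsum_split_finite:
  fixes f :: "'i \<Rightarrow> 'b::banach"
  assumes "f summable_on UNIV" "finite S"
  shows "infsum f UNIV = sum f S + infsum f (- S)"
proof -
  have "infsum f (S \<union> - S) = infsum f S + infsum f (- S)"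
    by (rule infsum_Un_disjoint) (use assms in \<open>auto intro: summable_on_subset_banach\<close>)
  then show ?thesis using assms(2) by simp
qed

lemma norm_infsum_tail_le:
  fixes h :: "'i \<Rightarrow> 'b::banach"
  assumes B: "B summable_on UNIV" and le: "\<And>n. norm (h n) \<le> B n" and S: "finite S"
  shows "norm (infsum h UNIV - sum h S) \<le> infsum B UNIV - sum B S"
proof -
  have "(\<lambda>n. norm (h n)) summable_on UNIV"
    by (rule summable_on_comparison_test[OF B]) (use le in auto)
  then have h: "h summable_on UNIV" by (rule abs_summable_summable)
  have tails: "h summable_on - S" "B summable_on - S"
    using h B by (auto intro: summable_on_subset_banach)
  have "norm (infsum h (- S)) \<le> infsum B (- S)"
    using tails by (intro norm_infsum_le[OF has_sum_infsum has_sum_infsum] le)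
  then show ?thesis
    using infsum_split_finite[OF h S] infsum_split_finite[OF B S] by simp
qed

lemma tendsto_infsum_dominated:
  fixes f :: "'i \<Rightarrow> 'a \<Rightarrow> 'b::banach"
  assumes B: "B summable_on UNIV"
    and bound: "\<forall>\<^sub>F x in L. \<forall>n. norm (f n x) \<le> B n"
    and bound_lim: "\<And>n. norm (g n) \<le> B n"
    and lim: "\<And>n. ((\<lambda>x. f n x) \<longlongrightarrow> g n) L"
  shows "((\<lambda>x. infsum (\<lambda>n. f n x) UNIV) \<longlongrightarrow> infsum g UNIV) L"
proof (rule tendstoI)
  fix e :: real
  assume "e > 0"
  then obtain S where S: "finite S" "dist (sum B S) (infsum B UNIV) \<le> e / 4"
    using infsum_finite_approximation[OF B, of "e / 4"] by auto
  have "infsum B UNIV - sum B S \<le> e / 4"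
    using S(2) unfolding dist_real_def by linarith
  then have tail: "norm (infsum h UNIV - sum h S) \<le> e / 4"
    if "\<And>n. norm (h n) \<le> B n" for h :: "'i \<Rightarrow> 'b"
    using norm_infsum_tail_le[OF B that S(1)] by linarith
  have "((\<lambda>x. \<Sum>n\<in>S. f n x) \<longlongrightarrow> (\<Sum>n\<in>S. g n)) L"
    by (intro tendsto_sum lim)
  then have "\<forall>\<^sub>F x in L. dist (\<Sum>n\<in>S. f n x) (\<Sum>n\<in>S. g n) < e / 4"
    using \<open>e > 0\<close> by (intro tendstoD) auto
  with bound show "\<forall>\<^sub>F x in L. dist (infsum (\<lambda>n. f n x) UNIV) (infsum g UNIV) < e"
  proof eventually_elim
    case (elim x)
    define I J sf sg where "I = infsum (\<lambda>n. f n x) UNIV" "J = infsum g UNIV"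
      "sf = (\<Sum>n\<in>S. f n x)" "sg = (\<Sum>n\<in>S. g n)"
    have "dist I J \<le> norm ((I - sf) + (sf - sg)) + norm (J - sg)"
      using norm_triangle_ineq4[of "(I - sf) + (sf - sg)" "J - sg"] by (simp add: dist_norm)
    also have "\<dots> \<le> norm (I - sf) + dist sf sg + norm (J - sg)"
      using norm_triangle_ineq[of "I - sf" "sf - sg"] by (simp add: dist_norm)
    also have "\<dots> < e"
      using tail[OF elim(1)[rule_format]] tail[OF bound_lim] elim(2) \<open>e > 0\<close> unfolding I_J_sf_sg_def by linarith
    finally have "dist I J < e" .
    then show ?case unfolding I_J_sf_sg_def .
  qed
qed

lemma infsum_eq_0_if_odd:
  fixes f :: "'a \<Rightarrow> 'b::real_normed_vector"
  assumes "\<And>x. \<sigma> (\<sigma> x) = x" "\<And>x. f (\<sigma> x) = - f x"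
  shows "infsum f UNIV = 0"
proof -
  have "infsum f UNIV = infsum (\<lambda>x. f (\<sigma> x)) UNIV"
    by (rule infsum_reindex_bij_witness[where i = \<sigma> and j = \<sigma>]) (use assms in auto)
  also have "\<dots> = - infsum f UNIV"
    by (simp add: assms(2) infsum_uminus)
  finally have "2 *\<^sub>R infsum f UNIV = 0"
    by (metis add.right_inverse scaleR_2)
  then show ?thesis by simp
qed

section \<open>Geometric sums and the Weyl quotient\<close>

lemma of_int_le_powi:
  assumes "2 \<le> x" "0 \<le> k"
  shows "of_int k \<le> (x :: real) powi k"
proof -
  obtain n where k: "k = int n" using assms(2) nonneg_int_cases by blast
  have "real n \<le> 2 ^ n"
    using less_exp[of n] by (metis less_imp_le of_nat_less_iff of_nat_numeral of_nat_power)
  also have "\<dots> \<le> x ^ n" using assms(1) by (intro power_mono) auto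
  finally show ?thesis by (simp add: k)
qed

lemma norm_powi_le:
  fixes z :: "'a::real_normed_field"
  assumes "norm z \<le> 2" "norm (inverse z) \<le> 2"
  shows "norm (z powi i) \<le> 2 powi \<bar>i\<bar>"
  using assms by (auto simp: power_int_def norm_power intro!: power_mono)

lemma norm_le_2_if_dist_1:
  fixes z :: "'a::real_normed_field"
  assumes "dist z 1 < 1/2"
  shows "norm z \<le> 2" "norm (inverse z) \<le> 2"
proof -
  have "norm z \<le> 1 + norm (z - 1)" "1 \<le> norm z + norm (z - 1)"
    using norm_triangle_sub[of z 1] norm_triangle_sub[of 1 z] by (simp_all add: norm_minus_commute)
  moreover have "norm (z - 1) < 1/2" using assms by (simp add: dist_norm)
  ultimately have "norm z \<le> 2" "1/2 \<le> norm z" by linarith+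
  then show "norm z \<le> 2" "norm (inverse z) \<le> 2"
    using le_imp_inverse_le[of "1/2" "norm z"] by (simp_all add: norm_inverse)
qed

definition geom_sum :: "int \<Rightarrow> 'a::field \<Rightarrow> 'a" where
  "geom_sum k z = isum k (power_int z)"

lemma geom_sum_plus1: "geom_sum (k + 1) z = geom_sum k z + z powi k"
  by (simp add: geom_sum_def isum_plus1)

lemma geom_sum_1 [simp]: "geom_sum k 1 = of_int k"
proof -
  have "power_int (1 :: 'a) = (\<lambda>_. 1)"
    by (simp add: fun_eq_iff)
  then show ?thesis
    using isum_telescope[of k "of_int :: int \<Rightarrow> 'a"] by (simp add: geom_sum_def)
qed

lemma geom_sum_mult:
  assumes "z \<noteq> 0"
  shows "(z - 1) * geom_sum k z = z powi k - 1"
proof -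
  have "(z - 1) * geom_sum k z = isum k (\<lambda>i. z powi (i + 1) - z powi i)"
    using assms by (simp add: geom_sum_def flip: isum_cmult) (simp add: power_int_add algebra_simps)
  then show ?thesis by (simp add: isum_telescope)
qed

lemma norm_geom_sum_le:
  fixes z :: "'a::real_normed_field"
  assumes "norm z \<le> 2" "norm (inverse z) \<le> 2"
  shows "norm (geom_sum k z) \<le> 4 powi \<bar>k\<bar>"
proof -
  have "norm (z powi i) \<le> 2 powi \<bar>k\<bar>" if "\<bar>i\<bar> \<le> \<bar>k\<bar>" for i
    using norm_powi_le[OF assms, of i] power_int_increasing[OF that, of "2 :: real"] by linarith
  then have "norm (geom_sum k z) \<le> of_int \<bar>k\<bar> * 2 powi \<bar>k\<bar>"
    unfolding geom_sum_def by (rule norm_isum_le)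
  also have "\<dots> \<le> 2 powi \<bar>k\<bar> * 2 powi \<bar>k\<bar>"
    by (intro mult_right_mono of_int_le_powi) auto
  also have "\<dots> = 4 powi \<bar>k\<bar>"
    by (simp flip: power_int_mult_distrib)
  finally show ?thesis .
qed

lemma tendsto_geom_sum:
  fixes f :: "'b \<Rightarrow> 'a::real_normed_field"
  shows "(f \<longlongrightarrow> c) L \<Longrightarrow> c \<noteq> 0 \<Longrightarrow> ((\<lambda>x. geom_sum k (f x)) \<longlongrightarrow> geom_sum k c) L"
  unfolding geom_sum_def isum_def by (auto intro!: tendsto_intros)

definition double_geom_sum :: "int \<Rightarrow> int \<Rightarrow> int \<Rightarrow> 'a::field \<Rightarrow> 'a \<Rightarrow> 'a" where
  "double_geom_sum \<alpha> \<beta> \<gamma> z1 z2 = isum \<gamma> (\<lambda>i. geom_sum (\<alpha> + i) z1 * geom_sum (\<beta> + i) z2)"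

definition geom_monomial :: "int \<Rightarrow> int \<Rightarrow> int \<Rightarrow> 'a::field \<Rightarrow> 'a \<Rightarrow> 'a" where
  "geom_monomial \<alpha> \<beta> \<gamma> z1 z2 = z1 powi \<alpha> * z2 powi \<beta> * geom_sum \<gamma> (z1 * z2)"

lemma double_geom_sum_mult:
  assumes "z1 \<noteq> 0" "z2 \<noteq> 0"
  shows "(z1 - 1) * (z2 - 1) * double_geom_sum \<alpha> \<beta> \<gamma> z1 z2 =
    geom_monomial \<alpha> \<beta> \<gamma> z1 z2 - geom_monomial \<alpha> \<beta> \<gamma> z1 1
    - geom_monomial \<alpha> \<beta> \<gamma> 1 z2 + geom_monomial \<alpha> \<beta> \<gamma> 1 1"
proof -
  define g where "g i = geom_monomial \<alpha> \<beta> i z1 z2 - geom_monomial \<alpha> \<beta> i z1 1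
    - geom_monomial \<alpha> \<beta> i 1 z2 + geom_monomial \<alpha> \<beta> i 1 1" for i
  have "g (i + 1) - g i = z1 powi \<alpha> * z2 powi \<beta> * (z1 * z2) powi i
      - z1 powi \<alpha> * z1 powi i - z2 powi \<beta> * z2 powi i + 1" for i
    unfolding g_def geom_monomial_def geom_sum_plus1 by (simp add: algebra_simps)
  also have "\<dots> i = (z1 powi \<alpha> * z1 powi i - 1) * (z2 powi \<beta> * z2 powi i - 1)" for i
    by (simp add: power_int_mult_distrib algebra_simps)
  also have "\<dots> i = ((z1 - 1) * geom_sum (\<alpha> + i) z1) * ((z2 - 1) * geom_sum (\<beta> + i) z2)" for i
    using assms by (simp add: geom_sum_mult power_int_add)
  also have "\<dots> i = (z1 - 1) * (z2 - 1) * (geom_sum (\<alpha> + i) z1 * geom_sum (\<beta> + i) z2)" for i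
    by (simp only: mult_ac)
  finally have step: "g (i + 1) - g i = (z1 - 1) * (z2 - 1) * (geom_sum (\<alpha> + i) z1 * geom_sum (\<beta> + i) z2)"
    for i .
  have "(z1 - 1) * (z2 - 1) * double_geom_sum \<alpha> \<beta> \<gamma> z1 z2 = isum \<gamma> (\<lambda>i. g (i + 1) - g i)"
    unfolding double_geom_sum_def step isum_cmult ..
  then show ?thesis
    unfolding isum_telescope by (simp add: g_def geom_monomial_def geom_sum_def)
qed

lemma geom_monomial_mult:
  assumes "z1 \<noteq> 0" "z2 \<noteq> 0"
  shows "(z1 * z2 - 1) * geom_monomial \<alpha> \<beta> \<gamma> z1 z2
    = z1 powi (\<alpha> + \<gamma>) * z2 powi (\<beta> + \<gamma>) - z1 powi \<alpha> * z2 powi \<beta>"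
proof -
  have "(z1 * z2 - 1) * geom_monomial \<alpha> \<beta> \<gamma> z1 z2
      = z1 powi \<alpha> * z2 powi \<beta> * ((z1 * z2 - 1) * geom_sum \<gamma> (z1 * z2))"
    by (simp add: geom_monomial_def mult_ac)
  also have "\<dots> = z1 powi \<alpha> * z2 powi \<beta> * ((z1 * z2) powi \<gamma> - 1)"
    using assms by (simp add: geom_sum_mult)
  finally show ?thesis
    using assms by (simp add: power_int_add power_int_mult_distrib algebra_simps)
qed

lemma geom_monomial_1_1 [simp]: "geom_monomial \<alpha> \<beta> \<gamma> 1 1 = of_int \<gamma>"
  by (simp add: geom_monomial_def)

lemma double_geom_sum_1_1:
  "6 * double_geom_sum \<alpha> \<beta> \<gamma> 1 1 = (of_int (6 * \<gamma> * \<alpha> * \<beta> + 3 * (\<alpha> + \<beta>) * \<gamma> * (\<gamma> - 1)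
     + \<gamma> * (\<gamma> - 1) * (2 * \<gamma> - 1)) :: 'a::field)"
proof -
  \<comment> \<open>p is a discrete antiderivative of 6 (\<alpha> + i)(\<beta> + i)\<close>
  define p where "p i = 6 * i * \<alpha> * \<beta> + 3 * (\<alpha> + \<beta>) * i * (i - 1) + i * (i - 1) * (2 * i - 1)" for i
  have step: "6 * (geom_sum (\<alpha> + i) 1 * geom_sum (\<beta> + i) 1) = (of_int (p (i + 1)) - of_int (p i) :: 'a)" for i
  proof -
    have "p (i + 1) - p i = 6 * ((\<alpha> + i) * (\<beta> + i))"
      by (simp add: p_def algebra_simps)
    then show ?thesis
      by (metis geom_sum_1 of_int_diff of_int_mult of_int_numeral)
  qed
  have "6 * double_geom_sum \<alpha> \<beta> \<gamma> 1 1 = isum \<gamma> (\<lambda>i. of_int (p (i + 1)) - (of_int (p i) :: 'a))"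
    unfolding double_geom_sum_def isum_cmult[symmetric] step ..
  then show ?thesis
    unfolding isum_telescope[of \<gamma> "\<lambda>i. of_int (p i)"] by (simp add: p_def)
qed

lemma norm_double_geom_sum_le:
  fixes z1 z2 :: "'a::real_normed_field"
  assumes "norm z1 \<le> 2" "norm (inverse z1) \<le> 2" "norm z2 \<le> 2" "norm (inverse z2) \<le> 2"
  shows "norm (double_geom_sum \<alpha> \<beta> \<gamma> z1 z2) \<le> 4 powi (\<bar>\<alpha>\<bar> + \<bar>\<beta>\<bar> + 3 * \<bar>\<gamma>\<bar>)"
proof -
  have "norm (geom_sum (\<alpha> + i) z1 * geom_sum (\<beta> + i) z2) \<le> 4 powi (\<bar>\<alpha>\<bar> + \<bar>\<beta>\<bar> + 2 * \<bar>\<gamma>\<bar>)"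
    if "\<bar>i\<bar> \<le> \<bar>\<gamma>\<bar>" for i
  proof -
    have "norm (geom_sum (\<alpha> + i) z1 * geom_sum (\<beta> + i) z2) \<le> 4 powi \<bar>\<alpha> + i\<bar> * 4 powi \<bar>\<beta> + i\<bar>"
      unfolding norm_mult using assms by (intro mult_mono norm_geom_sum_le) auto
    also have "\<dots> = 4 powi (\<bar>\<alpha> + i\<bar> + \<bar>\<beta> + i\<bar>)"
      by (simp add: power_int_add)
    also have "\<dots> \<le> 4 powi (\<bar>\<alpha>\<bar> + \<bar>\<beta>\<bar> + 2 * \<bar>\<gamma>\<bar>)"
      using that by (intro power_int_increasing) auto
    finally show ?thesis .
  qed
  then have "norm (double_geom_sum \<alpha> \<beta> \<gamma> z1 z2) \<le> of_int \<bar>\<gamma>\<bar> * 4 powi (\<bar>\<alpha>\<bar> + \<bar>\<beta>\<bar> + 2 * \<bar>\<gamma>\<bar>)"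
    unfolding double_geom_sum_def by (rule norm_isum_le)
  also have "\<dots> \<le> 4 powi \<bar>\<gamma>\<bar> * 4 powi (\<bar>\<alpha>\<bar> + \<bar>\<beta>\<bar> + 2 * \<bar>\<gamma>\<bar>)"
    by (intro mult_right_mono of_int_le_powi) auto
  also have "\<dots> = 4 powi (\<bar>\<alpha>\<bar> + \<bar>\<beta>\<bar> + 3 * \<bar>\<gamma>\<bar>)"
    by (simp flip: power_int_add) (simp add: algebra_simps)
  finally show ?thesis .
qed

text \<open>
  Apart from its theta weight, the summand of F is z1^(-1) z2^(-1) weyl_alternant n1 n2 z1 z2
  divided by (1 - 1/z1)(1 - 1/z2)(1 - 1/(z1 z2)); the exponents run over the orbit of (a, b) under the reflections
  (x, y) \<mapsto> (y - x, y) and (x, y) \<mapsto> (x, x - y).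
\<close>
definition weyl_alternant :: "int \<Rightarrow> int \<Rightarrow> 'a::field \<Rightarrow> 'a \<Rightarrow> 'a" where
  "weyl_alternant a b z1 z2 =
     z1 powi a * z2 powi b - z1 powi (b - a) * z2 powi b - z1 powi a * z2 powi (a - b)
     + z1 powi (-b) * z2 powi (a - b) + z1 powi (b - a) * z2 powi (-a) - z1 powi (-b) * z2 powi (-a)"

definition alternant_div_diag :: "int \<Rightarrow> int \<Rightarrow> 'a::field \<Rightarrow> 'a \<Rightarrow> 'a" where
  "alternant_div_diag a b z1 z2 = geom_monomial (-b) (-a) (a + b) z1 z2
     + geom_monomial (b - a) b (a - 2 * b) z1 z2 + geom_monomial a (a - b) (b - 2 * a) z1 z2"

definition weyl_quotient :: "int \<Rightarrow> int \<Rightarrow> 'a::field \<Rightarrow> 'a \<Rightarrow> 'a" where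
  "weyl_quotient a b z1 z2 = double_geom_sum (-b) (-a) (a + b) z1 z2
     + double_geom_sum (b - a) b (a - 2 * b) z1 z2 + double_geom_sum a (a - b) (b - 2 * a) z1 z2"

lemma alternant_div_diag_mult:
  assumes "z1 \<noteq> 0" "z2 \<noteq> 0"
  shows "(z1 * z2 - 1) * alternant_div_diag a b z1 z2 = weyl_alternant a b z1 z2"
  unfolding alternant_div_diag_def distrib_left geom_monomial_mult[OF assms]
  by (simp add: weyl_alternant_def algebra_simps)

lemma alternant_div_diag_1_1 [simp]: "alternant_div_diag a b 1 1 = 0"
  by (simp add: alternant_div_diag_def)

lemma alternant_div_diag_eq_0:
  assumes "z \<noteq> 0" "z \<noteq> 1"
  shows "alternant_div_diag a b z 1 = 0" "alternant_div_diag a b 1 z = 0"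
proof -
  have "(z - 1) * alternant_div_diag a b z 1 = 0" "(z - 1) * alternant_div_diag a b 1 z = 0"
    using alternant_div_diag_mult[of z 1 a b] alternant_div_diag_mult[of 1 z a b] assms(1)
    by (simp_all add: weyl_alternant_def)
  then show "alternant_div_diag a b z 1 = 0" "alternant_div_diag a b 1 z = 0"
    using assms(2) by simp_all
qed

lemma weyl_quotient_mult:
  assumes "z1 \<noteq> 0" "z2 \<noteq> 0" "z1 \<noteq> 1" "z2 \<noteq> 1"
  shows "(z1 - 1) * (z2 - 1) * (z1 * z2 - 1) * weyl_quotient a b z1 z2 = weyl_alternant a b z1 z2"
proof -
  have "(z1 - 1) * (z2 - 1) * weyl_quotient a b z1 z2 = alternant_div_diag a b z1 z2
      - alternant_div_diag a b z1 1 - alternant_div_diag a b 1 z2 + alternant_div_diag a b 1 1"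
    unfolding weyl_quotient_def distrib_left double_geom_sum_mult[OF assms(1,2)] alternant_div_diag_def
    by (simp add: algebra_simps)
  also have "\<dots> = alternant_div_diag a b z1 z2"
    using assms by (simp add: alternant_div_diag_eq_0)
  finally show ?thesis
    using alternant_div_diag_mult[OF assms(1,2)] by (metis mult.assoc mult.commute)
qed

lemma weyl_quotient_1_1:
  "2 * weyl_quotient a b 1 1 = - (of_int ((a - 2 * b) * (2 * a - b) * (a + b)) :: 'a::field_char_0)"
proof -
  have "6 * (2 * weyl_quotient a b 1 1) = 2 * (6 * double_geom_sum (-b) (-a) (a + b) 1 1)
      + 2 * (6 * double_geom_sum (b - a) b (a - 2 * b) 1 1) + 2 * (6 * double_geom_sum a (a - b) (b - 2 * a) 1 1 :: 'a)"
    by (simp add: weyl_quotient_def algebra_simps)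
  also have "\<dots> = 6 * (- of_int ((a - 2 * b) * (2 * a - b) * (a + b)))"
    unfolding double_geom_sum_1_1 by (simp add: algebra_simps)
  finally show ?thesis by simp
qed

lemma norm_weyl_quotient_le:
  fixes z1 z2 :: "'a::real_normed_field"
  assumes "norm z1 \<le> 2" "norm (inverse z1) \<le> 2" "norm z2 \<le> 2" "norm (inverse z2) \<le> 2"
  shows "norm (weyl_quotient a b z1 z2) \<le> 3 * 4 powi (8 * (\<bar>a\<bar> + \<bar>b\<bar>))"
proof -
  have le: "norm (double_geom_sum \<alpha> \<beta> \<gamma> z1 z2) \<le> 4 powi (8 * (\<bar>a\<bar> + \<bar>b\<bar>))"
    if "\<bar>\<alpha>\<bar> + \<bar>\<beta>\<bar> + 3 * \<bar>\<gamma>\<bar> \<le> 8 * (\<bar>a\<bar> + \<bar>b\<bar>)" for \<alpha> \<beta> \<gamma>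
    using norm_double_geom_sum_le[OF assms] power_int_increasing[OF that, of "4 :: real"]
    by (meson order_trans one_le_numeral)
  have "norm (weyl_quotient a b z1 z2) \<le> norm (double_geom_sum (-b) (-a) (a + b) z1 z2)
      + norm (double_geom_sum (b - a) b (a - 2 * b) z1 z2) + norm (double_geom_sum a (a - b) (b - 2 * a) z1 z2)"
    unfolding weyl_quotient_def by (intro norm_triangle_le add_mono norm_triangle_ineq order_refl)
  also have "\<dots> \<le> 3 * 4 powi (8 * (\<bar>a\<bar> + \<bar>b\<bar>))"
    using le[of "-b" "-a" "a + b"] le[of "b - a" b "a - 2 * b"] le[of a "a - b" "b - 2 * a"]
    by (simp only: abs_minus_cancel) (smt (verit) abs_triangle_ineq abs_triangle_ineq4)
  finally show ?thesis .
qed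

lemma tendsto_weyl_quotient:
  fixes f g :: "'b \<Rightarrow> 'a::real_normed_field"
  assumes "(f \<longlongrightarrow> c1) L" "(g \<longlongrightarrow> c2) L" "c1 \<noteq> 0" "c2 \<noteq> 0"
  shows "((\<lambda>x. weyl_quotient a b (f x) (g x)) \<longlongrightarrow> weyl_quotient a b c1 c2) L"
  unfolding weyl_quotient_def double_geom_sum_def isum_def
  using assms by (auto intro!: tendsto_intros tendsto_geom_sum)

section \<open>The theta series\<close>

definition theta_weight :: "complex \<Rightarrow> int \<times> int \<Rightarrow> complex" where
  "theta_weight \<tau> n = qpow \<tau> (2 * Qform (real_of_int (fst n) - 1/2) (real_of_int (snd n) - 1/2))"

definition F_term_poly :: "complex \<Rightarrow> complex \<Rightarrow> complex \<Rightarrow> int \<times> int \<Rightarrow> complex" where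
  "F_term_poly z1 z2 \<tau> n = theta_weight \<tau> n * (z1 * z2 * weyl_quotient (fst n) (snd n) z1 z2)"

lemma F_term_eq_F_term_poly:
  assumes "(z1, z2) \<in> regular_pts"
  shows "F_term z1 z2 \<tau> n = F_term_poly z1 z2 \<tau> n"
proof -
  obtain a b where n: "n = (a, b)" by (cases n)
  have z: "z1 \<noteq> 0" "z2 \<noteq> 0" "z1 \<noteq> 1" "z2 \<noteq> 1" "z1 * z2 \<noteq> 1"
    using assms by (auto simp: regular_pts_def)
  have num: "z1 powi (a - 1) * z2 powi (b - 1) - z1 powi (-a + b - 1) * z2 powi (b - 1)
      - z1 powi (a - 1) * z2 powi (-b + a - 1) + z1 powi (-b - 1) * z2 powi (-b + a - 1)
      + z1 powi (-a + b - 1) * z2 powi (-a - 1) - z1 powi (-b - 1) * z2 powi (-a - 1)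
      = weyl_alternant a b z1 z2 / (z1 * z2)"
  proof -
    have shift: "z1 powi (e - 1) = z1 powi e / z1" "z2 powi (e - 1) = z2 powi e / z2" for e
      using z by (simp_all add: power_int_diff)
    have "-a + b = b - a" "-b + a = a - b" by simp_all
    then show ?thesis
      unfolding shift using z by (simp add: weyl_alternant_def field_simps)
  qed
  have den: "(1 - inverse z1) * (1 - inverse z2) * (1 - inverse z1 * inverse z2)
      = (z1 - 1) * (z2 - 1) * (z1 * z2 - 1) / (z1 * z2)^2"
    using z by (simp add: field_simps power2_eq_square)
  have quot: "weyl_quotient a b z1 z2 = weyl_alternant a b z1 z2 / ((z1 - 1) * (z2 - 1) * (z1 * z2 - 1))"
    using weyl_quotient_mult[OF z(1-4), of a b] z by (simp add: eq_divide_eq ac_simps)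
  show ?thesis
    unfolding F_term_def F_term_poly_def n Let_def fst_conv snd_conv num den quot theta_weight_def
    using z by (simp add: field_simps power2_eq_square)
qed

lemma F_eq_infsum_F_term_poly: "(z1, z2) \<in> regular_pts \<Longrightarrow> F z1 z2 \<tau> = infsum (F_term_poly z1 z2 \<tau>) UNIV"
  by (simp add: F_def F_term_eq_F_term_poly)

lemma sum_squares_le_Qform: "x^2 + y^2 \<le> 2 * Qform x y"
proof -
  have "2 * Qform x y = x^2 + y^2 + (x - y)^2"
    by (simp add: Qform_def power2_eq_square algebra_simps)
  then show ?thesis by simp
qed

lemma linear_minus_Qform_le:
  assumes "c > 0"
  shows "K * (\<bar>x\<bar> + \<bar>y\<bar>) - c * Qform (x - 1/2) (y - 1/2) \<le> 2 * K^2 / c + c / 4"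
proof -
  have amgm: "K * \<bar>t\<bar> - c * t^2 / 4 \<le> K^2 / c" for t
  proof -
    have "0 \<le> (c * \<bar>t\<bar> / 2 - K)^2" by simp
    then have "(K * \<bar>t\<bar> - c * t^2 / 4) * c \<le> K^2"
      by (simp add: power2_eq_square algebra_simps abs_mult_self_eq)
    then show ?thesis using assms by (simp add: pos_le_divide_eq)
  qed
  have shift: "t^2 / 2 - 1/4 \<le> (t - 1/2)^2" for t :: real
  proof -
    have "0 \<le> (t - 1)^2" by simp
    then show ?thesis by (simp add: power2_eq_square algebra_simps)
  qed
  have "x^2 / 4 + y^2 / 4 - 1/4 \<le> Qform (x - 1/2) (y - 1/2)"
    using sum_squares_le_Qform[of "x - 1/2" "y - 1/2"] shift[of x] shift[of y] by linarith
  then have "c * (x^2 / 4 + y^2 / 4 - 1/4) \<le> c * Qform (x - 1/2) (y - 1/2)"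
    using assms by (intro mult_left_mono) auto
  then show ?thesis using amgm[of x] amgm[of y] by (simp add: algebra_simps)
qed

lemma summable_on_exp_neg_abs: "(\<lambda>k::int. exp (- \<bar>real_of_int k\<bar>)) summable_on UNIV"
proof -
  let ?e = "\<lambda>k::int. exp (- \<bar>real_of_int k\<bar>)"
  have "(\<lambda>n::nat. exp (-1 :: real) ^ n) summable_on UNIV"
    by (rule summable_nonneg_imp_summable_on_strong) (auto intro: summable_geometric)
  moreover have "?e \<circ> int = (\<lambda>n. exp (-1) ^ n)" "?e \<circ> (\<lambda>n. - int n) = (\<lambda>n. exp (-1) ^ n)"
    by (simp_all add: fun_eq_iff flip: exp_of_nat_mult)
  ultimately have "?e summable_on range int" "?e summable_on range (\<lambda>n. - int n)"
    by (simp_all add: summable_on_reindex inj_on_def)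
  then have "?e summable_on (range int \<union> range (\<lambda>n. - int n))"
    by (rule summable_on_union)
  also have "range int \<union> range (\<lambda>n. - int n) = UNIV"
    by (auto intro: int_cases2[of "x" for x])
  finally show ?thesis .
qed

lemma summable_on_exp_neg_abs2:
  "(\<lambda>n::int \<times> int. exp (- \<bar>real_of_int (fst n)\<bar>) * exp (- \<bar>real_of_int (snd n)\<bar>)) summable_on UNIV"
proof -
  let ?e = "\<lambda>k::int. exp (- \<bar>real_of_int k\<bar>)"
  have "(\<lambda>n. ?e (fst n) * ?e (snd n)) summable_on Sigma UNIV (\<lambda>_. UNIV)"
  proof (rule summable_on_SigmaI)
    show "((\<lambda>y. ?e (fst (x, y)) * ?e (snd (x, y))) has_sum (?e x * infsum ?e UNIV)) UNIV" for x
      using has_sum_cmult_right[OF has_sum_infsum[OF summable_on_exp_neg_abs], of "?e x"] by simp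
    show "(\<lambda>x. ?e x * infsum ?e UNIV) summable_on UNIV"
      using summable_on_exp_neg_abs by (rule summable_on_cmult_left)
  qed auto
  then show ?thesis by simp
qed

definition majorant :: "complex \<Rightarrow> int \<times> int \<Rightarrow> real" where
  "majorant \<tau> n = 12 * 4 powi (8 * (\<bar>fst n\<bar> + \<bar>snd n\<bar>)) * norm (theta_weight \<tau> n)"

lemma norm_theta_weight:
  "norm (theta_weight \<tau> n)
     = exp (- (4 * pi * Im \<tau>) * Qform (real_of_int (fst n) - 1/2) (real_of_int (snd n) - 1/2))"
  by (simp add: theta_weight_def qpow_def norm_exp_eq_Re)

lemma summable_on_majorant:
  assumes "Im \<tau> > 0"
  shows "majorant \<tau> summable_on UNIV"
proof -
  define c where "c = 4 * pi * Im \<tau>"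
  define K where "K = 8 * ln 4 + (1 :: real)"
  define A where "A = 2 * K^2 / c + c / 4"
  have "c > 0" using assms by (simp add: c_def)
  have le: "majorant \<tau> n \<le> 12 * exp A * (exp (- \<bar>real_of_int (fst n)\<bar>) * exp (- \<bar>real_of_int (snd n)\<bar>))"
    for n
  proof -
    obtain a b where n: "n = (a, b)" by (cases n)
    define x y where "x = real_of_int a" "y = real_of_int b"
    have "(4 :: real) powi (8 * (\<bar>a\<bar> + \<bar>b\<bar>)) = exp (8 * ln 4 * (\<bar>x\<bar> + \<bar>y\<bar>))"
      using exp_power_int[of "ln 4 :: real" "8 * (\<bar>a\<bar> + \<bar>b\<bar>)"] by (simp add: x_y_def mult_ac)
    then have "majorant \<tau> n = 12 * exp (8 * ln 4 * (\<bar>x\<bar> + \<bar>y\<bar>) - c * Qform (x - 1/2) (y - 1/2))"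
      by (simp add: majorant_def norm_theta_weight n x_y_def c_def exp_diff exp_minus field_simps)
    also have "\<dots> \<le> 12 * exp (A - \<bar>x\<bar> - \<bar>y\<bar>)"
      using linear_minus_Qform_le[OF \<open>c > 0\<close>, of K x y] by (simp add: A_def K_def algebra_simps)
    also have "\<dots> = 12 * exp A * (exp (- \<bar>x\<bar>) * exp (- \<bar>y\<bar>))"
      by (simp add: exp_diff exp_minus exp_add field_simps)
    finally show ?thesis by (simp add: n x_y_def)
  qed
  show ?thesis
    by (rule summable_on_comparison_test[OF summable_on_cmult_right[OF summable_on_exp_neg_abs2, of "12 * exp A"]])
       (use le in \<open>auto simp: majorant_def\<close>)
qed

lemma summable_on_if_norm_le_majorant:
  fixes f :: "int \<times> int \<Rightarrow> 'a::banach"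
  assumes "Im \<tau> > 0" "\<And>n. norm (f n) \<le> majorant \<tau> n"
  shows "f summable_on UNIV"
  by (rule abs_summable_summable, rule summable_on_comparison_test[OF summable_on_majorant[OF assms(1)]])
     (use assms(2) in auto)

lemma norm_F_term_poly_le:
  assumes "dist z1 1 < 1/2" "dist z2 1 < 1/2"
  shows "norm (F_term_poly z1 z2 \<tau> n) \<le> majorant \<tau> n"
proof -
  note z1 = norm_le_2_if_dist_1[OF assms(1)] and z2 = norm_le_2_if_dist_1[OF assms(2)]
  have "norm (z1 * z2 * weyl_quotient (fst n) (snd n) z1 z2) \<le> 2 * 2 * (3 * 4 powi (8 * (\<bar>fst n\<bar> + \<bar>snd n\<bar>)))"
    unfolding norm_mult using norm_weyl_quotient_le[OF z1 z2] z1 z2 by (intro mult_mono) auto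
  from mult_left_mono[OF this norm_ge_zero[of "theta_weight \<tau> n"]] show ?thesis
    by (simp add: F_term_poly_def majorant_def norm_mult mult_ac)
qed

lemma int_abs_le_square: "\<bar>a :: int\<bar> \<le> a^2"
proof (cases "a = 0")
  case False
  then have "\<bar>a\<bar> * 1 \<le> \<bar>a\<bar> * \<bar>a\<bar>" by (intro mult_left_mono) auto
  then show ?thesis by (simp add: power2_eq_square abs_mult_self_eq)
qed simp

definition F0_coeff :: "int \<times> int \<Rightarrow> int" where
  "F0_coeff n = 12 * fst n * snd n - 3 * (fst n)^2 - 3 * (snd n)^2 - fst n - snd n"

lemma abs_F0_coeff_le: "\<bar>F0_coeff n\<bar> \<le> 12 * (\<bar>fst n\<bar> + \<bar>snd n\<bar>)^2"
proof -
  obtain a b where n: "n = (a, b)" by (cases n)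
  have "a * b \<le> \<bar>a\<bar> * \<bar>b\<bar>" "- (a * b) \<le> \<bar>a\<bar> * \<bar>b\<bar>"
    by (simp_all add: abs_mult flip: abs_mult)
  moreover have "(\<bar>a\<bar> + \<bar>b\<bar>)^2 = a^2 + b^2 + 2 * (\<bar>a\<bar> * \<bar>b\<bar>)"
    by (simp add: power2_eq_square algebra_simps abs_mult_self_eq)
  moreover have "F0_coeff n = 12 * (a * b) - 3 * a^2 - 3 * b^2 - a - b"
    by (simp add: F0_coeff_def n)
  ultimately show ?thesis
    using int_abs_le_square[of a] int_abs_le_square[of b] by (simp add: n) linarith
qed

lemma norm_F0_coeff_term_le: "norm (of_int (F0_coeff n) * theta_weight \<tau> n) \<le> majorant \<tau> n"
proof -
  define N where "N = \<bar>fst n\<bar> + \<bar>snd n\<bar>"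
  have "0 \<le> N" by (simp add: N_def)
  have "real_of_int \<bar>F0_coeff n\<bar> \<le> 12 * (of_int N)^2"
    using abs_F0_coeff_le[of n] unfolding N_def by (metis of_int_le_iff of_int_mult of_int_numeral of_int_power)
  also have "\<dots> \<le> 12 * (2 powi N)^2"
    using of_int_le_powi[of 2 N] \<open>0 \<le> N\<close> by (intro mult_left_mono power_mono) auto
  also have "\<dots> = 12 * 4 powi N"
    by (simp add: power2_eq_square flip: power_int_mult_distrib)
  also have "\<dots> \<le> 12 * 4 powi (8 * N)"
    using \<open>0 \<le> N\<close> by (intro mult_left_mono power_int_increasing) auto
  finally show ?thesis
    unfolding majorant_def norm_mult N_def[symmetric] by (intro mult_right_mono) auto
qed

lemma theta_weight_reflect: "theta_weight \<tau> (1 - a, 1 - b) = theta_weight \<tau> (a, b)"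
proof -
  have "Qform (real_of_int (1 - a) - 1/2) (real_of_int (1 - b) - 1/2)
      = Qform (real_of_int a - 1/2) (real_of_int b - 1/2)"
    by (simp add: Qform_def power2_eq_square algebra_simps)
  then show ?thesis by (simp add: theta_weight_def)
qed

lemma tendsto_infsum_F_term_poly:
  assumes "Im \<tau> > 0"
  shows "((\<lambda>z. infsum (F_term_poly (fst z) (snd z) \<tau>) UNIV) \<longlongrightarrow> infsum (F_term_poly 1 1 \<tau>) UNIV)
           (at (1, 1) within S)"
proof -
  let ?L = "at (1 :: complex, 1 :: complex) within S"
  have fst: "((\<lambda>z. fst z) \<longlongrightarrow> 1) ?L" and snd: "((\<lambda>z. snd z) \<longlongrightarrow> 1) ?L"
    using tendsto_fst[OF tendsto_ident_at] tendsto_snd[OF tendsto_ident_at] by auto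
  have "\<forall>\<^sub>F z in ?L. dist (fst z) 1 < 1/2" "\<forall>\<^sub>F z in ?L. dist (snd z) 1 < 1/2"
    by (rule tendstoD[OF fst], simp) (rule tendstoD[OF snd], simp)
  then have "\<forall>\<^sub>F z in ?L. \<forall>n. norm (F_term_poly (fst z) (snd z) \<tau> n) \<le> majorant \<tau> n"
    by eventually_elim (auto intro: norm_F_term_poly_le)
  then show ?thesis
  proof (rule tendsto_infsum_dominated[OF summable_on_majorant[OF assms]])
    show "norm (F_term_poly 1 1 \<tau> n) \<le> majorant \<tau> n" for n
      by (rule norm_F_term_poly_le) simp_all
    show "((\<lambda>z. F_term_poly (fst z) (snd z) \<tau> n) \<longlongrightarrow> F_term_poly 1 1 \<tau> n) ?L" for n
      unfolding F_term_poly_def by (intro tendsto_intros tendsto_weyl_quotient fst snd) simp_all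
  qed
qed

lemma infsum_F_term_poly_1_1:
  assumes "Im \<tau> > 0"
  shows "infsum (F_term_poly 1 1 \<tau>) UNIV = 1/4 * infsum (\<lambda>n. of_int (F0_coeff n) * theta_weight \<tau> n) UNIV"
proof -
  define d where "d n = - 2 * ((fst n - 2 * snd n) * (2 * fst n - snd n) * (fst n + snd n)) - F0_coeff n" for n
  define r where "r n = theta_weight \<tau> n * of_int (d n) / 4" for n
  have split: "F_term_poly 1 1 \<tau> n = 1/4 * (of_int (F0_coeff n) * theta_weight \<tau> n) + r n" for n
  proof -
    have W: "weyl_quotient (fst n) (snd n) (1 :: complex) 1
        = - of_int ((fst n - 2 * snd n) * (2 * fst n - snd n) * (fst n + snd n)) / 2"
      using weyl_quotient_1_1[of "fst n" "snd n", where 'a = complex] by (simp add: field_simps)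
    show ?thesis
      unfolding F_term_poly_def W r_def d_def by (simp add: field_simps)
  qed
  have "r (1 - a, 1 - b) = - r (a, b)" for a b
  proof -
    have "d (1 - a, 1 - b) = - d (a, b)"
      by (simp add: d_def F0_coeff_def power2_eq_square algebra_simps)
    then show ?thesis by (simp add: r_def theta_weight_reflect)
  qed
  then have "infsum r UNIV = 0"
    by (intro infsum_eq_0_if_odd[where \<sigma> = "\<lambda>n. (1 - fst n, 1 - snd n)"]) auto
  have P: "(\<lambda>n. of_int (F0_coeff n) * theta_weight \<tau> n) summable_on UNIV"
    using assms norm_F0_coeff_term_le by (rule summable_on_if_norm_le_majorant)
  have "(F_term_poly 1 1 \<tau>) summable_on UNIV"
    using assms norm_F_term_poly_le by (rule summable_on_if_norm_le_majorant) simp_all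
  then have "(\<lambda>n. F_term_poly 1 1 \<tau> n + (- 1/4) * (of_int (F0_coeff n) * theta_weight \<tau> n)) summable_on UNIV"
    using P by (intro summable_on_add summable_on_cmult_right)
  then have "r summable_on UNIV"
    by (simp add: split)
  have "F_term_poly 1 1 \<tau> = (\<lambda>n. 1/4 * (of_int (F0_coeff n) * theta_weight \<tau> n) + r n)"
    by (simp add: fun_eq_iff split)
  then have "infsum (F_term_poly 1 1 \<tau>) UNIV
      = 1/4 * infsum (\<lambda>n. of_int (F0_coeff n) * theta_weight \<tau> n) UNIV + infsum r UNIV"
    using summable_on_cmult_right[OF P, of "1/4"] \<open>r summable_on UNIV\<close>
    by (simp only: infsum_add infsum_cmult_right')
  then show ?thesis
    using \<open>infsum r UNIV = 0\<close> by simp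
qed

theorem proposition6p1:
  fixes \<tau> :: complex
  assumes "Im \<tau> > 0"
  shows "((\<lambda>z. F (fst z) (snd z) \<tau>) \<longlongrightarrow>
           (1/4) * (\<Sum>\<^sub>\<infinity> n\<in>(UNIV :: (int \<times> int) set).
              of_int (12 * fst n * snd n - 3 * (fst n)^2 - 3 * (snd n)^2 - fst n - snd n)
              * qpow \<tau> (2 * Qform (real_of_int (fst n) - 1/2) (real_of_int (snd n) - 1/2))))
         (at (1, 1) within regular_pts)"
proof -
  have "\<forall>\<^sub>F z in at (1, 1) within regular_pts.
          infsum (F_term_poly (fst z) (snd z) \<tau>) UNIV = F (fst z) (snd z) \<tau>"
    by (auto simp: eventually_at_filter F_eq_infsum_F_term_poly)
  with tendsto_infsum_F_term_poly[OF assms]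
  have "((\<lambda>z. F (fst z) (snd z) \<tau>) \<longlongrightarrow> infsum (F_term_poly 1 1 \<tau>) UNIV) (at (1, 1) within regular_pts)"
    by (rule Lim_transform_eventually)
  then show ?thesis
    unfolding infsum_F_term_poly_1_1[OF assms] F0_coeff_def theta_weight_def .
qed

end
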